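(* Let $M$ be a Kokotsakis mesh with planar faces whose central face is a (non-degenerate) triangle $A_1A_2A_3$, in general position in the following sense: for each $i$, $v_i,w_i$ are not collinear and $a_{i-1},a_i$ do not lie in the plane spanned by $v_i,w_i$; the lines $l_1,l_2,l_3$ are pairwise non-parallel, the points $B_1,B_2,B_3$ are not collinear, and $A_i\notin\{B_{i-1},B_i\}$. Then $M$ is not infinitesimally flexible (and hence not flexible).
   Context: A Kokotsakis mesh with central $n$-gon consists of a central face with vertices $A_1,\dots,A_n$ (indices in $\mathbb Z/n\mathbb Z$) and points $V_i,W_i$ such that at each $A_i$ exactly four faces meet, containing the angles $A_{i+1}A_iA_{i-1}$ (central face), $A_{i-1}A_iV_i$, $V_iA_iW_i$, $W_iA_iA_{i+1}$; the face containing $W_iA_iA_{i+1}$ also contains $A_iA_{i+1}V_{i+1}$. Put $a_i=A_{i+1}-A_i$, $v_i=V_i-A_i$, $w_i=W_i-A_i$. $l_i$ is the intersection line of the plane of the central face with the plane through $A_i,V_i,W_i$, and $B_i=l_i\cap l_{i+1}$. Infinitesimally flexible: there is a nonzero infinitesimal isometric deformation with the central face fixed (each face moves infinitesimally rigidly). Flexible: there is a continuous non-constant family of meshes starting at $M$, with the central face fixed, in which each face stays congruent to its initial position. *)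

theory Defs
  imports "HOL-Analysis.Analysis"
begin

text \<open>Indices are 0,1,2 (read modulo 3).
  A mesh is given by point functions A V W :: nat \<Rightarrow> real^3 (only 0,1,2 matter).
  Faces: the central face A0 A1 A2; for each i the side face through
  A i, A (i+1), V (i+1), W i (the face containing the angles W_i A_i A_{i+1} and
  A_i A_{i+1} V_{i+1}); the corner face at A i through V i, A i, W i.\<close>

definition nx :: "nat \<Rightarrow> nat" where "nx i = (i + 1) mod 3"
definition pv :: "nat \<Rightarrow> nat" where "pv i = (i + 2) mod 3"

text \<open>Planar faces (the side faces are quadrilaterals that must be planar;
  the central face and the corner angles are planar automatically).\<close>
definition planar_faces :: "(nat \<Rightarrow> real^3) \<Rightarrow> (nat \<Rightarrow> real^3) \<Rightarrow> (nat \<Rightarrow> real^3) \<Rightarrow> bool" where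
  "planar_faces A V W \<longleftrightarrow> (\<forall>i<3. coplanar {A i, A (nx i), V (nx i), W i})"

definition inf_rigid :: "((real^3) \<times> (real^3)) list \<Rightarrow> bool" where
  "inf_rigid ps \<longleftrightarrow> (\<exists>\<omega> \<tau>. \<forall>(p, u) \<in> set ps. u = cross3 \<omega> p + \<tau>)"

text \<open>Infinitesimal isometric deformation with the central face fixed: velocities 0 at
  the A i, velocities dV i, dW i at V i, W i, each face moving infinitesimally rigidly.\<close>
definition inf_isometric_deformation ::
  "(nat \<Rightarrow> real^3) \<Rightarrow> (nat \<Rightarrow> real^3) \<Rightarrow> (nat \<Rightarrow> real^3) \<Rightarrow> (nat \<Rightarrow> real^3) \<Rightarrow> (nat \<Rightarrow> real^3) \<Rightarrow> bool" where
  "inf_isometric_deformation A V W dV dW \<longleftrightarrow>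
     (\<forall>i<3. inf_rigid [(A i, 0), (A (nx i), 0), (V (nx i), dV (nx i)), (W i, dW i)]
          \<and> inf_rigid [(V i, dV i), (A i, 0), (W i, dW i)])"

definition inf_flexible :: "(nat \<Rightarrow> real^3) \<Rightarrow> (nat \<Rightarrow> real^3) \<Rightarrow> (nat \<Rightarrow> real^3) \<Rightarrow> bool" where
  "inf_flexible A V W \<longleftrightarrow>
     (\<exists>dV dW. inf_isometric_deformation A V W dV dW \<and> (\<exists>i<3. dV i \<noteq> 0 \<or> dW i \<noteq> 0))"

definition face_congruent :: "((real^3) \<times> (real^3)) list \<Rightarrow> bool" where
  "face_congruent ps \<longleftrightarrow>
     (\<exists>f :: real^3 \<Rightarrow> real^3. (\<forall>x y. dist (f x) (f y) = dist x y) \<and> (\<forall>(p, q) \<in> set ps. f p = q))"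

definition flexible :: "(nat \<Rightarrow> real^3) \<Rightarrow> (nat \<Rightarrow> real^3) \<Rightarrow> (nat \<Rightarrow> real^3) \<Rightarrow> bool" where
  "flexible A V W \<longleftrightarrow>
     (\<exists>(\<epsilon>::real) (Vt :: real \<Rightarrow> nat \<Rightarrow> real^3) (Wt :: real \<Rightarrow> nat \<Rightarrow> real^3).
        \<epsilon> > 0 \<and>
        (\<forall>i<3. continuous_on {0..\<epsilon>} (\<lambda>s. Vt s i) \<and> continuous_on {0..\<epsilon>} (\<lambda>s. Wt s i)) \<and>
        (\<forall>i<3. Vt 0 i = V i \<and> Wt 0 i = W i) \<and>
        (\<forall>s\<in>{0..\<epsilon>}. \<forall>i<3.
            face_congruent [(A i, A i), (A (nx i), A (nx i)), (V (nx i), Vt s (nx i)), (W i, Wt s i)]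
          \<and> face_congruent [(V i, Vt s i), (A i, A i), (W i, Wt s i)]) \<and>
        (\<exists>s\<in>{0..\<epsilon>}. \<exists>i<3. Vt s i \<noteq> V i \<or> Wt s i \<noteq> W i))"

definition lline :: "(nat \<Rightarrow> real^3) \<Rightarrow> (nat \<Rightarrow> real^3) \<Rightarrow> (nat \<Rightarrow> real^3) \<Rightarrow> nat \<Rightarrow> (real^3) set" where
  "lline A V W i = affine hull {A 0, A 1, A 2} \<inter> affine hull {A i, V i, W i}"

definition lines_parallel :: "(real^3) set \<Rightarrow> (real^3) set \<Rightarrow> bool" where
  "lines_parallel L M \<longleftrightarrow> (\<exists>c. M = (\<lambda>x. c + x) ` L)"

definition Bpt :: "(nat \<Rightarrow> real^3) \<Rightarrow> (nat \<Rightarrow> real^3) \<Rightarrow> (nat \<Rightarrow> real^3) \<Rightarrow> nat \<Rightarrow> real^3" where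
  "Bpt A V W i = (THE p. p \<in> lline A V W i \<inter> lline A V W (nx i))"

end

theory Submission
  imports Defs
begin

text \<open>
  For the corner at A i put v i = V i - A i, w i = W i - A i, N i = v i \<times> w i, and
  X i = (A i - A (i - 1)) \<bullet> N i,  Y i = (A (i + 1) - A i) \<bullet> N i.
  The whole argument rests on the cycle condition X 0 * X 1 * X 2 \<noteq> Y 0 * Y 1 * Y 2.

  1. Vector algebra in three-space: expansion of a vector in the basis x, y, x \<times> y and its
     consequences (planes, coplanarity, vectors orthogonal to two normals).
  2. Plane geometry: a Ceva-type dichotomy shows that if the cycle condition fails, the lines
     l i (the traces of the corner planes in the plane of the triangle) are concurrent or two of
     them are parallel; the general position hypotheses exclude both.
  3. The cyclic linear system  t (i - 1) * X i = t i * Y i  has determinant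
     X 0 X 1 X 2 - Y 0 Y 1 Y 2, so under the cycle condition its solutions are controlled by its
     residuals.
  4. Infinitesimal rigidity: an infinitesimal motion fixing the central face turns each side face
     about its hinge with an angular speed t i; the corners force the cyclic system exactly, so t = 0.
  5. Rigidity: along a continuous deformation, the displacements z i of the points W i satisfy the
     same system up to errors of second order, and z i is controlled by its normal component;
     hence S \<le> L * S^2 for the total displacement S, which forces S = 0 by continuity.
\<close>

unbundle cross3_syntax

lemma less_3_iff: "i < (3::nat) \<longleftrightarrow> i = 0 \<or> i = 1 \<or> i = 2"
  by auto

lemma all_less_3: "(\<forall>i<(3::nat). P i) \<longleftrightarrow> P 0 \<and> P 1 \<and> P 2"
  unfolding less_3_iff by blast

lemma nx_pv_values:
  "nx 0 = 1" "nx 1 = 2" "nx 2 = 0" "pv 0 = 2" "pv 1 = 0" "pv 2 = 1"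
  by (simp_all add: nx_def pv_def)

lemma nx_pv_range:
  assumes "i < 3"
  shows "nx i < 3" "pv i < 3" "nx (pv i) = i" "nx i \<noteq> i"
  using assms unfolding less_3_iff by (auto simp: nx_def pv_def)

subsection \<open>Vector algebra in three-space\<close>

lemma cross_basis_expansion:
  fixes x y u :: "real^3"
  shows "((x \<times> y) \<bullet> (x \<times> y)) *\<^sub>R u = (u \<bullet> (x \<times> y)) *\<^sub>R (x \<times> y)
     + ((x \<bullet> u) * (y \<bullet> y) - (y \<bullet> u) * (x \<bullet> y)) *\<^sub>R x
     + ((y \<bullet> u) * (x \<bullet> x) - (x \<bullet> u) * (x \<bullet> y)) *\<^sub>R y"
  unfolding vec_eq_iff forall_3 cross3_def inner_vec_def sum_3 by (simp add: algebra_simps)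

lemma triple_product_swap:
  fixes x y z :: "real^3"
  shows "x \<bullet> (y \<times> z) = - (y \<bullet> (x \<times> z))"
  unfolding cross3_def inner_vec_def sum_3 by (simp add: algebra_simps)

lemma triple_product_rotate:
  fixes x y z :: "real^3"
  shows "x \<bullet> (y \<times> z) = z \<bullet> (x \<times> y)"
  by (metis cross_triple inner_commute)

lemma triple_product_span2:
  fixes e f :: "real^3"
  shows "(a1 *\<^sub>R e + b1 *\<^sub>R f) \<bullet> ((a2 *\<^sub>R e + b2 *\<^sub>R f) \<times> (a3 *\<^sub>R e + b3 *\<^sub>R f)) = 0"
  unfolding cross3_def inner_vec_def sum_3 by (simp add: algebra_simps)

lemma combination_if_orthogonal_to_cross:
  fixes x y u :: "real^3"
  assumes "x \<times> y \<noteq> 0" "u \<bullet> (x \<times> y) = 0"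
  shows "\<exists>c d. u = c *\<^sub>R x + d *\<^sub>R y"
proof -
  let ?m = "x \<times> y"
  have "(?m \<bullet> ?m) *\<^sub>R u = ((x \<bullet> u) * (y \<bullet> y) - (y \<bullet> u) * (x \<bullet> y)) *\<^sub>R x
      + ((y \<bullet> u) * (x \<bullet> x) - (x \<bullet> u) * (x \<bullet> y)) *\<^sub>R y"
    using cross_basis_expansion[of x y u] assms(2) by simp
  moreover have "u = (1 / (?m \<bullet> ?m)) *\<^sub>R ((?m \<bullet> ?m) *\<^sub>R u)"
    using assms(1) by simp
  ultimately have "u = (((x \<bullet> u) * (y \<bullet> y) - (y \<bullet> u) * (x \<bullet> y)) / (?m \<bullet> ?m)) *\<^sub>R x
      + (((y \<bullet> u) * (x \<bullet> x) - (x \<bullet> u) * (x \<bullet> y)) / (?m \<bullet> ?m)) *\<^sub>R y"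
    by (simp add: scaleR_add_right)
  then show ?thesis by blast
qed

lemma triple_product_nonzero:
  fixes a v w :: "real^3"
  assumes "\<not> collinear {0, v, w}" "a \<notin> span {v, w}"
  shows "a \<bullet> (v \<times> w) \<noteq> 0"
proof
  assume "a \<bullet> (v \<times> w) = 0"
  moreover have "v \<times> w \<noteq> 0" using assms(1) cross_eq_0 by blast
  ultimately obtain c d where "a = c *\<^sub>R v + d *\<^sub>R w"
    using combination_if_orthogonal_to_cross by blast
  then have "a \<in> span {v, w}" by (simp add: span_add span_mul span_base)
  with assms(2) show False ..
qed

lemma orthogonal_to_two_normals:
  fixes n N u :: "real^3"
  assumes "u \<bullet> n = 0" "u \<bullet> N = 0"
  shows "((n \<times> N) \<bullet> (n \<times> N)) *\<^sub>R u = (u \<bullet> (n \<times> N)) *\<^sub>R (n \<times> N)"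
  using cross_basis_expansion[of n N u] assms by (simp add: inner_commute)

lemma cross_nonzero_if_noncollinear:
  fixes p q r :: "real^3"
  assumes "\<not> collinear {p, q, r}"
  shows "(q - p) \<times> (r - p) \<noteq> 0"
proof -
  have "collinear {q, p, r} \<longleftrightarrow> collinear {0, q - p, r - p}"
    by (rule collinear_3) simp
  moreover have "{q, p, r} = {p, q, r}" by auto
  ultimately show ?thesis using assms cross_eq_0 by metis
qed

lemma cross_nonzero_if_oblique:
  fixes n N a :: "real^3"
  assumes "n \<noteq> 0" "a \<bullet> n = 0" "a \<bullet> N \<noteq> 0"
  shows "n \<times> N \<noteq> 0"
proof
  assume "n \<times> N = 0"
  then have "(n \<bullet> n) *\<^sub>R N = (N \<bullet> n) *\<^sub>R n"
    using Lagrange[of n n N] by (simp add: inner_commute)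
  then have "(n \<bullet> n) * (a \<bullet> N) = (N \<bullet> n) * (a \<bullet> n)"
    by (metis inner_scaleR_right)
  then show False using assms by simp
qed

lemma affine_hull_3_plane:
  fixes p q r :: "real^3"
  assumes "(q - p) \<times> (r - p) \<noteq> 0"
  shows "affine hull {p, q, r} = {x. (x - p) \<bullet> ((q - p) \<times> (r - p)) = 0}"
proof (intro set_eqI iffI)
  fix x assume "x \<in> affine hull {p, q, r}"
  then obtain u v w where x: "x = u *\<^sub>R p + v *\<^sub>R q + w *\<^sub>R r" "u + v + w = 1"
    unfolding affine_hull_3 by blast
  moreover have "u = 1 - v - w" using x(2) by simp
  ultimately have "x - p = v *\<^sub>R (q - p) + w *\<^sub>R (r - p)"
    by (simp add: algebra_simps)
  then show "x \<in> {x. (x - p) \<bullet> ((q - p) \<times> (r - p)) = 0}"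
    by (simp add: inner_add_left dot_cross_self)
next
  fix x assume "x \<in> {x. (x - p) \<bullet> ((q - p) \<times> (r - p)) = 0}"
  then have "(x - p) \<bullet> ((q - p) \<times> (r - p)) = 0" by simp
  then obtain c d where "x - p = c *\<^sub>R (q - p) + d *\<^sub>R (r - p)"
    using combination_if_orthogonal_to_cross[OF assms] by blast
  then have "x = (1 - c - d) *\<^sub>R p + c *\<^sub>R q + d *\<^sub>R r"
    by (simp add: algebra_simps)
  then show "x \<in> affine hull {p, q, r}"
    unfolding affine_hull_3 by (intro CollectI exI[of _ "1 - c - d"] exI[of _ c] exI[of _ d]) simp
qed

lemma coplanar_combination:
  fixes p q r s :: "real^3"
  assumes "coplanar {p, q, r, s}" "(q - p) \<times> (r - p) \<noteq> 0"
  shows "\<exists>\<alpha> \<beta>. s - p = \<alpha> *\<^sub>R (q - p) + \<beta> *\<^sub>R (r - p)"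
proof -
  obtain u v w where sub: "{p, q, r, s} \<subseteq> affine hull {u, v, w}"
    using assms(1) unfolding coplanar_def by blast
  have rel: "\<exists>c d. x - y = c *\<^sub>R (v - u) + d *\<^sub>R (w - u)"
    if hx: "x \<in> affine hull {u, v, w}" and hy: "y \<in> affine hull {u, v, w}" for x y
  proof -
    obtain a b c where x: "x = a *\<^sub>R u + b *\<^sub>R v + c *\<^sub>R w" "a + b + c = 1"
      using hx unfolding affine_hull_3 by blast
    obtain a' b' c' where y: "y = a' *\<^sub>R u + b' *\<^sub>R v + c' *\<^sub>R w" "a' + b' + c' = 1"
      using hy unfolding affine_hull_3 by blast
    have a: "a = 1 - b - c" "a' = 1 - b' - c'" using x(2) y(2) by simp_all
    have "x - y = (b - b') *\<^sub>R (v - u) + (c - c') *\<^sub>R (w - u)"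
      unfolding x(1) y(1) a by (simp add: algebra_simps)
    then show ?thesis by blast
  qed
  obtain c1 d1 where "q - p = c1 *\<^sub>R (v - u) + d1 *\<^sub>R (w - u)" using rel sub by blast
  moreover obtain c2 d2 where "r - p = c2 *\<^sub>R (v - u) + d2 *\<^sub>R (w - u)" using rel sub by blast
  moreover obtain c3 d3 where "s - p = c3 *\<^sub>R (v - u) + d3 *\<^sub>R (w - u)" using rel sub by blast
  ultimately have "(s - p) \<bullet> ((q - p) \<times> (r - p)) = 0" by (simp only: triple_product_span2)
  then show ?thesis using combination_if_orthogonal_to_cross[OF assms(2)] by blast
qed

lemma inner_le_square:
  fixes x y :: "'a::real_inner"
  assumes "norm x \<le> s" "norm y \<le> s"
  shows "\<bar>x \<bullet> y\<bar> \<le> s\<^sup>2"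
proof -
  have "\<bar>x \<bullet> y\<bar> \<le> norm x * norm y" by (rule Cauchy_Schwarz_ineq2)
  also have "\<dots> \<le> s * s" using assms by (simp add: mult_mono')
  finally show ?thesis by (simp add: power2_eq_square)
qed

lemma abs_mult_le:
  fixes c q B :: real
  assumes "\<bar>q\<bar> \<le> B"
  shows "\<bar>c * q\<bar> \<le> \<bar>c\<bar> * B"
  unfolding abs_mult using assms by (simp add: mult_left_mono)

subsection \<open>Lines in a plane\<close>

text \<open>Within a plane with normal n, a second normal N and a point q cut out a line. Two such
  lines with a common direction u are parallel, since every direction of either line is
  parallel to u.\<close>

lemma orthogonal_directions_agree:
  fixes n N M u y :: "real^3"
  assumes nN: "n \<times> N \<noteq> 0" and u: "u \<noteq> 0" "u \<bullet> n = 0" "u \<bullet> N = 0" "u \<bullet> M = 0"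
    and y: "y \<bullet> n = 0" "y \<bullet> N = 0"
  shows "y \<bullet> M = 0"
proof -
  let ?m = "n \<times> N"
  have mm: "?m \<bullet> ?m \<noteq> 0" using nN by simp
  have eu: "(?m \<bullet> ?m) *\<^sub>R u = (u \<bullet> ?m) *\<^sub>R ?m" by (rule orthogonal_to_two_normals[OF u(2,3)])
  have ey: "(?m \<bullet> ?m) *\<^sub>R y = (y \<bullet> ?m) *\<^sub>R ?m" by (rule orthogonal_to_two_normals[OF y])
  have "u \<bullet> ?m \<noteq> 0" using eu mm u(1) by auto
  moreover have "(?m \<bullet> ?m) * (u \<bullet> M) = (u \<bullet> ?m) * (?m \<bullet> M)"
    using arg_cong[OF eu, of "\<lambda>x. x \<bullet> M"] by simp
  ultimately have "?m \<bullet> M = 0" using u(4) by simp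
  moreover have "(?m \<bullet> ?m) * (y \<bullet> M) = (y \<bullet> ?m) * (?m \<bullet> M)"
    using arg_cong[OF ey, of "\<lambda>x. x \<bullet> M"] by simp
  ultimately show ?thesis using mm by simp
qed

lemma parallel_plane_sections:
  fixes n N N' p q q' u :: "real^3"
  assumes nN: "n \<times> N \<noteq> 0" "n \<times> N' \<noteq> 0"
    and u: "u \<noteq> 0" "u \<bullet> n = 0" "u \<bullet> N = 0" "u \<bullet> N' = 0"
    and q: "(q - p) \<bullet> n = 0" "(q' - p) \<bullet> n = 0"
  shows "lines_parallel {x. (x - p) \<bullet> n = 0 \<and> (x - q) \<bullet> N = 0} {x. (x - p) \<bullet> n = 0 \<and> (x - q') \<bullet> N' = 0}"
  unfolding lines_parallel_def
proof (rule exI[of _ "q' - q"], intro set_eqI iffI)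
  fix x assume "x \<in> {x. (x - p) \<bullet> n = 0 \<and> (x - q') \<bullet> N' = 0}"
  then have x: "(x - p) \<bullet> n = 0" "(x - q') \<bullet> N' = 0" by auto
  have "(x - q') \<bullet> n = 0" using x(1) q by (simp add: inner_diff_left)
  then have "(x - q') \<bullet> N = 0"
    using orthogonal_directions_agree[OF nN(2) u(1,2,4,3)] x(2) by blast
  moreover have "(x - (q' - q) - p) \<bullet> n = 0" using x(1) q by (simp add: inner_diff_left)
  ultimately have "x - (q' - q) \<in> {x. (x - p) \<bullet> n = 0 \<and> (x - q) \<bullet> N = 0}"
    by (simp add: algebra_simps)
  then show "x \<in> (\<lambda>x. (q' - q) + x) ` {x. (x - p) \<bullet> n = 0 \<and> (x - q) \<bullet> N = 0}"
    by (rule rev_image_eqI) simp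
next
  fix y assume "y \<in> (\<lambda>x. (q' - q) + x) ` {x. (x - p) \<bullet> n = 0 \<and> (x - q) \<bullet> N = 0}"
  then obtain x where y: "y = (q' - q) + x" and x: "(x - p) \<bullet> n = 0" "(x - q) \<bullet> N = 0" by auto
  have "(x - q) \<bullet> n = 0" using x(1) q by (simp add: inner_diff_left)
  then have "(x - q) \<bullet> N' = 0"
    using orthogonal_directions_agree[OF nN(1) u(1,2,3,4)] x(2) by blast
  moreover have "y - q' = x - q" using y by simp
  moreover have "(y - p) \<bullet> n = 0" using y x(1) q by (simp add: inner_diff_left inner_add_left)
  ultimately show "y \<in> {x. (x - p) \<bullet> n = 0 \<and> (x - q') \<bullet> N' = 0}" by simp
qed

definition plane_normal :: "(nat \<Rightarrow> real^3) \<Rightarrow> real^3" where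
  "plane_normal A = (A 1 - A 0) \<times> (A 2 - A 0)"

lemma triangle_edge_normals:
  fixes A N :: "nat \<Rightarrow> real^3"
  shows "(A 2 - A 0) \<bullet> N 0 = - ((A 0 - A 2) \<bullet> N 0)"
    and "(A 2 - A 0) \<bullet> N 1 = (A 1 - A 0) \<bullet> N 1 + (A 2 - A 1) \<bullet> N 1"
    and "(A 1 - A 0) \<bullet> N 2 = - ((A 2 - A 1) \<bullet> N 2) - (A 0 - A 2) \<bullet> N 2"
    and "(A 2 - A 0) \<bullet> N 2 = - ((A 0 - A 2) \<bullet> N 2)"
  by (simp_all add: inner_diff_left)

text \<open>The two halves of a Ceva-type dichotomy for the lines through A i with normals N i inside the
  plane of the triangle, under the Ceva condition X 0 X 1 X 2 = Y 0 Y 1 Y 2: depending on whether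
  X 0 X 2 + X 0 Y 2 + Y 0 Y 2 vanishes, the lines through A 0 and A 1 have a common direction, or
  all three lines pass through one point.\<close>

lemma ceva_common_direction:
  fixes A N :: "nat \<Rightarrow> real^3"
  defines "X0 \<equiv> (A 0 - A 2) \<bullet> N 0" and "X1 \<equiv> (A 1 - A 0) \<bullet> N 1" and "X2 \<equiv> (A 2 - A 1) \<bullet> N 2"
    and "Y0 \<equiv> (A 1 - A 0) \<bullet> N 0" and "Y1 \<equiv> (A 2 - A 1) \<bullet> N 1" and "Y2 \<equiv> (A 0 - A 2) \<bullet> N 2"
  assumes n: "plane_normal A \<noteq> 0" and Y: "Y0 \<noteq> 0" "Y2 \<noteq> 0"
    and S: "X0 * X2 + X0 * Y2 + Y0 * Y2 = 0" and ceva: "X0 * X1 * X2 = Y0 * Y1 * Y2"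
  shows "\<exists>D. D \<noteq> 0 \<and> D \<bullet> plane_normal A = 0 \<and> D \<bullet> N 0 = 0 \<and> D \<bullet> N 1 = 0"
proof -
  define e1 where "e1 = A 1 - A 0"
  define e2 where "e2 = A 2 - A 0"
  note N = triangle_edge_normals[of A N, folded e1_def e2_def X0_def X1_def X2_def Y0_def Y1_def Y2_def]
  have N': "e1 \<bullet> N 0 = Y0" "e1 \<bullet> N 1 = X1" unfolding e1_def X1_def Y0_def by simp_all
  have n_eq: "plane_normal A = e1 \<times> e2" unfolding plane_normal_def e1_def e2_def ..
  define D where "D = (X0 * Y2) *\<^sub>R e1 + (Y0 * Y2) *\<^sub>R e2"
  have "D \<times> e1 = - ((Y0 * Y2) *\<^sub>R (e1 \<times> e2))"
    unfolding D_def by (simp add: cross_add_left cross_mult_left cross_skew[of e2 e1])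
  then have "D \<noteq> 0" using n Y unfolding n_eq by auto
  moreover have "D \<bullet> plane_normal A = 0"
    unfolding D_def n_eq by (simp add: inner_add_left dot_cross_self)
  moreover have "D \<bullet> N 0 = 0"
    unfolding D_def by (simp add: inner_add_left N N' algebra_simps)
  moreover have "D \<bullet> N 1 = X1 * (X0 * X2 + X0 * Y2 + Y0 * Y2) - X0 * X1 * X2 + Y0 * Y1 * Y2"
    unfolding D_def
    by (simp only: inner_add_left inner_scaleR_left N N') (simp add: algebra_simps)
  then have "D \<bullet> N 1 = 0" using S ceva by simp
  ultimately show ?thesis by blast
qed

lemma ceva_common_point:
  fixes A N :: "nat \<Rightarrow> real^3"
  defines "X0 \<equiv> (A 0 - A 2) \<bullet> N 0" and "X1 \<equiv> (A 1 - A 0) \<bullet> N 1" and "X2 \<equiv> (A 2 - A 1) \<bullet> N 2"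
    and "Y0 \<equiv> (A 1 - A 0) \<bullet> N 0" and "Y1 \<equiv> (A 2 - A 1) \<bullet> N 1" and "Y2 \<equiv> (A 0 - A 2) \<bullet> N 2"
  assumes S: "X0 * X2 + X0 * Y2 + Y0 * Y2 \<noteq> 0" and ceva: "X0 * X1 * X2 = Y0 * Y1 * Y2"
  shows "\<exists>P. (P - A 0) \<bullet> plane_normal A = 0 \<and> (\<forall>i<3. (P - A i) \<bullet> N i = 0)"
proof -
  define e1 where "e1 = A 1 - A 0"
  define e2 where "e2 = A 2 - A 0"
  note N = triangle_edge_normals[of A N, folded e1_def e2_def X0_def X1_def X2_def Y0_def Y1_def Y2_def]
  have N': "e1 \<bullet> N 0 = Y0" "e1 \<bullet> N 1 = X1" unfolding e1_def X1_def Y0_def by simp_all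
  define S where "S = X0 * X2 + X0 * Y2 + Y0 * Y2"
  define P where "P = A 0 + ((X0 * Y2) / S) *\<^sub>R e1 + ((Y0 * Y2) / S) *\<^sub>R e2"
  have P0: "P - A 0 = ((X0 * Y2) / S) *\<^sub>R e1 + ((Y0 * Y2) / S) *\<^sub>R e2"
    unfolding P_def by simp
  have P1: "P - A 1 = ((X0 * Y2) / S - 1) *\<^sub>R e1 + ((Y0 * Y2) / S) *\<^sub>R e2"
    unfolding P_def e1_def by (simp add: algebra_simps)
  have P2: "P - A 2 = ((X0 * Y2) / S) *\<^sub>R e1 + ((Y0 * Y2) / S - 1) *\<^sub>R e2"
    unfolding P_def e2_def by (simp add: algebra_simps)
  have "(P - A 0) \<bullet> plane_normal A = 0"
    unfolding P0 plane_normal_def e1_def e2_def by (simp add: inner_add_left dot_cross_self)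
  moreover have "(P - A 0) \<bullet> N 0 = 0"
    unfolding P0 by (simp add: inner_add_left N N' algebra_simps)
  moreover have "(P - A 1) \<bullet> N 1 = ((X0 * Y2 - S) * X1 + (Y0 * Y2) * (X1 + Y1)) / S"
    unfolding P1 using S unfolding S_def[symmetric]
    by (simp only: inner_add_left inner_scaleR_left N N') (simp add: field_simps)
  then have "(P - A 1) \<bullet> N 1 = 0" using ceva by (simp add: S_def algebra_simps)
  moreover have "(P - A 2) \<bullet> N 2 = ((X0 * Y2) * (- X2 - Y2) + (Y0 * Y2 - S) * (- Y2)) / S"
    unfolding P2 using S unfolding S_def[symmetric]
    by (simp only: inner_add_left inner_scaleR_left N) (simp add: field_simps)
  then have "(P - A 2) \<bullet> N 2 = 0" by (simp add: S_def algebra_simps)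
  ultimately have "(P - A 0) \<bullet> plane_normal A = 0 \<and> (\<forall>i<3. (P - A i) \<bullet> N i = 0)"
    unfolding all_less_3 by blast
  then show ?thesis by blast
qed

lemma ceva_dichotomy:
  fixes A N :: "nat \<Rightarrow> real^3"
  assumes nondeg: "\<not> collinear {A 0, A 1, A 2}"
    and Y: "(A 1 - A 0) \<bullet> N 0 \<noteq> 0" "(A 0 - A 2) \<bullet> N 2 \<noteq> 0"
    and ceva: "((A 0 - A 2) \<bullet> N 0) * ((A 1 - A 0) \<bullet> N 1) * ((A 2 - A 1) \<bullet> N 2)
      = ((A 1 - A 0) \<bullet> N 0) * ((A 2 - A 1) \<bullet> N 1) * ((A 0 - A 2) \<bullet> N 2)"
  shows "(\<exists>D. D \<noteq> 0 \<and> D \<bullet> plane_normal A = 0 \<and> D \<bullet> N 0 = 0 \<and> D \<bullet> N 1 = 0)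
    \<or> (\<exists>P. (P - A 0) \<bullet> plane_normal A = 0 \<and> (\<forall>i<3. (P - A i) \<bullet> N i = 0))"
proof (cases "((A 0 - A 2) \<bullet> N 0) * ((A 2 - A 1) \<bullet> N 2) + ((A 0 - A 2) \<bullet> N 0) * ((A 0 - A 2) \<bullet> N 2)
    + ((A 1 - A 0) \<bullet> N 0) * ((A 0 - A 2) \<bullet> N 2) = 0")
  case True
  have "plane_normal A \<noteq> 0"
    unfolding plane_normal_def by (rule cross_nonzero_if_noncollinear[OF nondeg])
  then show ?thesis using ceva_common_direction[OF _ Y True ceva] by blast
next
  case False
  then show ?thesis using ceva_common_point[OF False ceva] by blast
qed

subsection \<open>A cyclic linear system\<close>

text \<open>Elimination for the system  t (i - 1) * X i = t i * Y i  (indices mod 3), whose determinant is X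
  0 X 1 X 2 - Y 0 Y 1 Y 2.\<close>

lemma cyclic_elimination:
  fixes t0 t1 t2 X0 X1 X2 Y0 Y1 Y2 :: real
  shows "t0 * (X0 * X1 * X2 - Y0 * Y1 * Y2)
    = Y1 * Y2 * (t2 * X0 - t0 * Y0) + X0 * Y1 * (t1 * X2 - t2 * Y2) + X0 * X2 * (t0 * X1 - t1 * Y1)"
  by (simp add: algebra_simps)

lemma cyclic_coordinate_bound:
  fixes t0 t1 t2 X0 X1 X2 Y0 Y1 Y2 e :: real
  assumes det: "X0 * X1 * X2 \<noteq> Y0 * Y1 * Y2"
    and "\<bar>t2 * X0 - t0 * Y0\<bar> \<le> e" "\<bar>t0 * X1 - t1 * Y1\<bar> \<le> e" "\<bar>t1 * X2 - t2 * Y2\<bar> \<le> e"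
  shows "\<bar>t0\<bar> \<le> (\<bar>Y1 * Y2\<bar> + \<bar>X0 * Y1\<bar> + \<bar>X0 * X2\<bar>) / \<bar>X0 * X1 * X2 - Y0 * Y1 * Y2\<bar> * e"
proof -
  define M where "M = \<bar>Y1 * Y2\<bar> + \<bar>X0 * Y1\<bar> + \<bar>X0 * X2\<bar>"
  define \<Delta> where "\<Delta> = X0 * X1 * X2 - Y0 * Y1 * Y2"
  have "\<bar>t0 * \<Delta>\<bar> \<le> M * e"
    unfolding \<Delta>_def cyclic_elimination M_def
    using abs_mult_le[OF assms(2), of "Y1 * Y2"] abs_mult_le[OF assms(4), of "X0 * Y1"]
      abs_mult_le[OF assms(3), of "X0 * X2"]
    by (simp add: algebra_simps) linarith
  moreover have "\<bar>\<Delta>\<bar> > 0" using det unfolding \<Delta>_def by simp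
  ultimately have "\<bar>t0\<bar> \<le> M * e / \<bar>\<Delta>\<bar>" by (simp add: abs_mult le_divide_eq)
  then show ?thesis unfolding M_def \<Delta>_def by simp
qed

lemma cyclic_system_bound:
  fixes X Y :: "nat \<Rightarrow> real"
  assumes det: "X 0 * X 1 * X 2 \<noteq> Y 0 * Y 1 * Y 2"
  shows "\<exists>C. \<forall>t e. (\<forall>i<3. \<bar>t (pv i) * X i - t i * Y i\<bar> \<le> e) \<longrightarrow> (\<forall>i<3. \<bar>t i\<bar> \<le> C * e)"
proof -
  define \<Delta> where "\<Delta> = \<bar>X 0 * X 1 * X 2 - Y 0 * Y 1 * Y 2\<bar>"
  define C0 where "C0 = (\<bar>Y 1 * Y 2\<bar> + \<bar>X 0 * Y 1\<bar> + \<bar>X 0 * X 2\<bar>) / \<Delta>"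
  define C1 where "C1 = (\<bar>Y 2 * Y 0\<bar> + \<bar>X 1 * Y 2\<bar> + \<bar>X 1 * X 0\<bar>) / \<Delta>"
  define C2 where "C2 = (\<bar>Y 0 * Y 1\<bar> + \<bar>X 2 * Y 0\<bar> + \<bar>X 2 * X 1\<bar>) / \<Delta>"
  have "\<forall>i<3. \<bar>t i\<bar> \<le> (C0 + C1 + C2) * e"
    if approx: "\<forall>i<3. \<bar>t (pv i) * X i - t i * Y i\<bar> \<le> e" for t e
  proof -
    have E: "\<bar>t 2 * X 0 - t 0 * Y 0\<bar> \<le> e" "\<bar>t 0 * X 1 - t 1 * Y 1\<bar> \<le> e" "\<bar>t 1 * X 2 - t 2 * Y 2\<bar> \<le> e"
      using approx unfolding all_less_3 nx_pv_values by simp_all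
    have "X 1 * X 2 * X 0 \<noteq> Y 1 * Y 2 * Y 0" "X 2 * X 0 * X 1 \<noteq> Y 2 * Y 0 * Y 1"
      using det by (simp_all add: ac_simps)
    from cyclic_coordinate_bound[OF det E] cyclic_coordinate_bound[OF this(1) E(2,3,1)]
      cyclic_coordinate_bound[OF this(2) E(3,1,2)]
    have "\<bar>t 0\<bar> \<le> C0 * e" "\<bar>t 1\<bar> \<le> C1 * e" "\<bar>t 2\<bar> \<le> C2 * e"
      unfolding C0_def C1_def C2_def \<Delta>_def by (simp_all add: ac_simps)
    moreover have "0 \<le> C0" "0 \<le> C1" "0 \<le> C2" "0 \<le> e"
      using E(1) unfolding C0_def C1_def C2_def \<Delta>_def by simp_all
    ultimately show ?thesis unfolding all_less_3
      by (smt (verit, best) mult_right_mono)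
  qed
  then show ?thesis by blast
qed

subsection \<open>Motions of a single face\<close>

lemma motion_fixing_point:
  fixes \<omega> \<tau> p x u :: "real^3"
  assumes "0 = \<omega> \<times> p + \<tau>" "u = \<omega> \<times> x + \<tau>"
  shows "u = \<omega> \<times> (x - p)"
  using assms by (simp add: Cross3.right_diff_distrib algebra_simps)

lemma side_face_velocity:
  fixes p q r s dr ds :: "real^3"
  assumes rigid: "inf_rigid [(p, 0), (q, 0), (r, dr), (s, ds)]" and "q \<noteq> p"
  shows "\<exists>t. ds = t *\<^sub>R ((q - p) \<times> (s - p)) \<and> dr = t *\<^sub>R ((q - p) \<times> (r - q))"
proof -
  obtain \<omega> \<tau> where "0 = \<omega> \<times> p + \<tau>" "0 = \<omega> \<times> q + \<tau>" "dr = \<omega> \<times> r + \<tau>" "ds = \<omega> \<times> s + \<tau>"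
    using rigid unfolding inf_rigid_def by auto
  then have v: "0 = \<omega> \<times> (q - p)" "dr = \<omega> \<times> (r - q)" "ds = \<omega> \<times> (s - p)"
    using motion_fixing_point by blast+
  \<comment> \<open>a motion fixing the hinge q - p is a rotation about it\<close>
  define a where "a = q - p"
  have hinge: "(a \<bullet> a) *\<^sub>R \<omega> = (a \<bullet> \<omega>) *\<^sub>R a"
    using Lagrange[of a \<omega> a] v(1) cross_skew[of \<omega> a] unfolding a_def by simp
  have "a \<bullet> a \<noteq> 0" using \<open>q \<noteq> p\<close> unfolding a_def by simp
  then have "\<omega> = (1 / (a \<bullet> a)) *\<^sub>R ((a \<bullet> a) *\<^sub>R \<omega>)" by simp
  then have \<omega>: "\<omega> = ((a \<bullet> \<omega>) / (a \<bullet> a)) *\<^sub>R a" unfolding hinge by simp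
  show ?thesis
    using v(2,3) unfolding a_def[symmetric] by (subst (asm) (1 2) \<omega>) (auto simp: cross_mult_left)
qed

text \<open>An infinitesimal motion fixing the apex p of an angle preserves the inner product of its legs to
  first order.\<close>

lemma corner_velocity:
  fixes p v w dv dw :: "real^3"
  assumes "inf_rigid [(v, dv), (p, 0), (w, dw)]"
  shows "dv \<bullet> (w - p) + (v - p) \<bullet> dw = 0"
proof -
  obtain \<omega> \<tau> where "dv = \<omega> \<times> v + \<tau>" "0 = \<omega> \<times> p + \<tau>" "dw = \<omega> \<times> w + \<tau>"
    using assms unfolding inf_rigid_def by auto
  then have "dv = \<omega> \<times> (v - p)" "dw = \<omega> \<times> (w - p)"
    using motion_fixing_point by blast+
  then show ?thesis
    using triple_product_swap[of "v - p" \<omega> "w - p"] triple_product_rotate[of \<omega> "v - p" "w - p"]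
    by (simp add: inner_commute)
qed

text \<open>A finite congruence of a planar side face fixing its hinge p q: the moved vertex s stays on two
  spheres around p and q, and the fourth vertex r follows with the same planar coordinate.\<close>

lemma side_face_congruence:
  fixes p q r s r' s' :: "real^3"
  assumes fc: "face_congruent [(p, p), (q, q), (r, r'), (s, s')]"
    and co: "r - p = \<alpha> *\<^sub>R (q - p) + \<beta> *\<^sub>R (s - p)"
  shows "(q - p) \<bullet> (s' - s) = 0" "2 * ((s - p) \<bullet> (s' - s)) + (s' - s) \<bullet> (s' - s) = 0"
    "r' - r = \<beta> *\<^sub>R (s' - s)"
proof -
  obtain f :: "real^3 \<Rightarrow> real^3" where iso: "\<forall>x y. dist (f x) (f y) = dist x y"
    and f: "f p = p" "f q = q" "f r = r'" "f s = s'"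
    using fc unfolding face_congruent_def by auto
  \<comment> \<open>an isometry fixing p is linear after moving p to the origin\<close>
  define g where "g x = f (x + p) - p" for x
  have "g 0 = 0" "\<forall>x y. dist (g x) (g y) = dist x y"
    unfolding g_def using iso f by (simp_all add: dist_norm)
  then have "linear g" by (rule isometry_linear)
  then have "g (r - p) = \<alpha> *\<^sub>R g (q - p) + \<beta> *\<^sub>R g (s - p)"
    unfolding co by (simp add: linear_add linear_scale)
  moreover have "g (r - p) = r' - p" "g (q - p) = q - p" "g (s - p) = s' - p"
    unfolding g_def using f by simp_all
  ultimately have image: "r' - p = \<alpha> *\<^sub>R (q - p) + \<beta> *\<^sub>R (s' - p)" by simp
  have "r' - r = (r' - p) - (r - p)" by simp
  also have "\<dots> = \<beta> *\<^sub>R (s' - s)" unfolding image co by (simp add: algebra_simps)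
  finally show "r' - r = \<beta> *\<^sub>R (s' - s)" .
  define z where "z = s' - s"
  have "norm ((s - p) + z) = norm (s - p)" "norm ((s - q) + z) = norm (s - q)"
    using iso[rule_format, of s p] iso[rule_format, of s q] f unfolding z_def by (simp_all add: dist_norm)
  then have "((s - p) + z) \<bullet> ((s - p) + z) = (s - p) \<bullet> (s - p)"
    "((s - q) + z) \<bullet> ((s - q) + z) = (s - q) \<bullet> (s - q)"
    by (simp_all add: norm_eq)
  then have sphere_p: "2 * ((s - p) \<bullet> z) + z \<bullet> z = 0" and sphere_q: "2 * ((s - q) \<bullet> z) + z \<bullet> z = 0"
    by (simp_all add: inner_add_left inner_add_right inner_commute)
  show "2 * ((s - p) \<bullet> (s' - s)) + (s' - s) \<bullet> (s' - s) = 0" using sphere_p unfolding z_def .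
  from sphere_p sphere_q show "(q - p) \<bullet> (s' - s) = 0"
    unfolding z_def[symmetric] by (simp add: inner_diff_left)
qed

lemma corner_congruence:
  fixes p v w v' w' :: "real^3"
  assumes "face_congruent [(v, v'), (p, p), (w, w')]"
  shows "(v' - p) \<bullet> (w' - p) = (v - p) \<bullet> (w - p)"
proof -
  obtain f :: "real^3 \<Rightarrow> real^3" where iso: "\<forall>x y. dist (f x) (f y) = dist x y"
    and f: "f v = v'" "f p = p" "f w = w'"
    using assms unfolding face_congruent_def by auto
  have "norm (v' - p) = norm (v - p)" "norm (w' - p) = norm (w - p)"
    "norm ((v' - p) - (w' - p)) = norm ((v - p) - (w - p))"
    using iso[rule_format, of v p] iso[rule_format, of w p] iso[rule_format, of v w] f
    by (simp_all add: dist_norm)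
  then have "(v' - p) \<bullet> (v' - p) = (v - p) \<bullet> (v - p)" "(w' - p) \<bullet> (w' - p) = (w - p) \<bullet> (w - p)"
    "((v' - p) - (w' - p)) \<bullet> ((v' - p) - (w' - p)) = ((v - p) - (w - p)) \<bullet> ((v - p) - (w - p))"
    by (simp_all only: norm_eq)
  then show ?thesis by (simp only: inner_diff_left inner_diff_right inner_commute)
qed

subsection \<open>Second-order estimates\<close>

definition normal_coord :: "real^3 \<Rightarrow> real^3 \<Rightarrow> real^3 \<Rightarrow> real" where
  "normal_coord a w z = (z \<bullet> (a \<times> w)) / ((a \<times> w) \<bullet> (a \<times> w))"

lemma orthogonal_decomposition:
  fixes a w z :: "real^3"
  assumes m: "a \<times> w \<noteq> 0" and az: "a \<bullet> z = 0"
  shows "z = normal_coord a w z *\<^sub>R (a \<times> w)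
    + ((w \<bullet> z) / ((a \<times> w) \<bullet> (a \<times> w))) *\<^sub>R ((a \<bullet> a) *\<^sub>R w - (a \<bullet> w) *\<^sub>R a)"
proof -
  let ?m = "a \<times> w"
  have "(?m \<bullet> ?m) *\<^sub>R z = (z \<bullet> ?m) *\<^sub>R ?m + (w \<bullet> z) *\<^sub>R ((a \<bullet> a) *\<^sub>R w - (a \<bullet> w) *\<^sub>R a)"
    using cross_basis_expansion[of a w z] az by (simp add: algebra_simps)
  moreover have "z = (1 / (?m \<bullet> ?m)) *\<^sub>R ((?m \<bullet> ?m) *\<^sub>R z)" using m by simp
  ultimately show ?thesis unfolding normal_coord_def by (simp add: scaleR_add_right)
qed

lemma displacement_bound:
  fixes a w :: "real^3"
  assumes m: "a \<times> w \<noteq> 0"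
  shows "\<exists>R\<ge>0. \<forall>z. a \<bullet> z = 0 \<longrightarrow> 2 * (w \<bullet> z) + z \<bullet> z = 0
    \<longrightarrow> norm z \<le> \<bar>normal_coord a w z\<bar> * norm (a \<times> w) + R * (norm z)\<^sup>2"
proof (intro exI[of _ "norm ((a \<bullet> a) *\<^sub>R w - (a \<bullet> w) *\<^sub>R a) / (2 * ((a \<times> w) \<bullet> (a \<times> w)))"] conjI allI impI)
  let ?m = "a \<times> w" and ?r = "(a \<bullet> a) *\<^sub>R w - (a \<bullet> w) *\<^sub>R a"
  show "0 \<le> norm ?r / (2 * (?m \<bullet> ?m))" by simp
  fix z assume az: "a \<bullet> z = 0" and sphere: "2 * (w \<bullet> z) + z \<bullet> z = 0"
  have "norm z \<le> norm (normal_coord a w z *\<^sub>R ?m) + norm (((w \<bullet> z) / (?m \<bullet> ?m)) *\<^sub>R ?r)"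
    using orthogonal_decomposition[OF m az] norm_triangle_ineq by metis
  also have "\<dots> = \<bar>normal_coord a w z\<bar> * norm ?m + \<bar>w \<bullet> z\<bar> / (?m \<bullet> ?m) * norm ?r"
    by simp
  also have "w \<bullet> z = - ((norm z)\<^sup>2 / 2)"
    using sphere by (simp add: power2_norm_eq_inner)
  finally show "norm z \<le> \<bar>normal_coord a w z\<bar> * norm ?m + norm ?r / (2 * (?m \<bullet> ?m)) * (norm z)\<^sup>2"
    by (simp add: field_simps)
qed

lemma second_order_terms_bound:
  fixes z z' :: "real^3" and b C C' :: real
  shows "\<bar>- (b * (z' \<bullet> z)) + (b * C') * (z' \<bullet> z') / 2 + C * (z \<bullet> z) / 2\<bar>
    \<le> (\<bar>b\<bar> + \<bar>C\<bar> + \<bar>b\<bar> * \<bar>C'\<bar>) * (norm z + norm z')\<^sup>2"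
proof -
  define s where "s = norm z + norm z'"
  have "norm z \<le> s" "norm z' \<le> s" unfolding s_def by simp_all
  then have sq: "\<bar>z' \<bullet> z\<bar> \<le> s\<^sup>2" "\<bar>z' \<bullet> z'\<bar> \<le> s\<^sup>2" "\<bar>z \<bullet> z\<bar> \<le> s\<^sup>2"
    using inner_le_square by blast+
  have "\<bar>b * (z' \<bullet> z)\<bar> \<le> \<bar>b\<bar> * s\<^sup>2" by (rule abs_mult_le[OF sq(1)])
  moreover have "\<bar>(b * C') * (z' \<bullet> z')\<bar> \<le> (\<bar>b\<bar> * \<bar>C'\<bar>) * s\<^sup>2"
    using abs_mult_le[OF sq(2), of "b * C'"] by (simp add: abs_mult)
  moreover have "\<bar>C * (z \<bullet> z)\<bar> \<le> \<bar>C\<bar> * s\<^sup>2" by (rule abs_mult_le[OF sq(3)])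
  moreover have "0 \<le> \<bar>b\<bar> * \<bar>C'\<bar> * s\<^sup>2" "0 \<le> \<bar>C\<bar> * s\<^sup>2" by simp_all
  ultimately show ?thesis unfolding s_def[symmetric]
    by (simp add: algebra_simps) linarith
qed

text \<open>At a corner, the congruence of the angle links the normal coordinates of the displacements of
  the two adjacent side faces: they satisfy one equation of the cyclic system up to a second-order
  error. Here a, w and a', w' belong to the leaving and the entering side face, and b is the
  planar coordinate of the corner vertex v in the entering face.\<close>

lemma vertex_estimate:
  fixes a w a' w' v :: "real^3" and b :: real
  assumes m: "a \<times> w \<noteq> 0" "a' \<times> w' \<noteq> 0" and hinge: "b *\<^sub>R (a' \<times> w') = a' \<times> v"
  shows "\<exists>K\<ge>0. \<forall>z z'. a \<bullet> z = 0 \<longrightarrow> 2 * (w \<bullet> z) + z \<bullet> z = 0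
      \<longrightarrow> a' \<bullet> z' = 0 \<longrightarrow> 2 * (w' \<bullet> z') + z' \<bullet> z' = 0
      \<longrightarrow> (v + b *\<^sub>R z') \<bullet> (w + z) = v \<bullet> w
      \<longrightarrow> \<bar>normal_coord a' w' z' * (a' \<bullet> (v \<times> w)) - normal_coord a w z * (a \<bullet> (v \<times> w))\<bar>
          \<le> K * (norm z + norm z')\<^sup>2"
proof -
  define C where "C = (v \<bullet> ((a \<bullet> a) *\<^sub>R w - (a \<bullet> w) *\<^sub>R a)) / ((a \<times> w) \<bullet> (a \<times> w))"
  define C' where "C' = (w \<bullet> ((a' \<bullet> a') *\<^sub>R w' - (a' \<bullet> w') *\<^sub>R a')) / ((a' \<times> w') \<bullet> (a' \<times> w'))"
  show ?thesis
  proof (intro exI[of _ "\<bar>b\<bar> + \<bar>C\<bar> + \<bar>b\<bar> * \<bar>C'\<bar>"] conjI allI impI)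
    show "0 \<le> \<bar>b\<bar> + \<bar>C\<bar> + \<bar>b\<bar> * \<bar>C'\<bar>" by simp
    fix z z' assume az: "a \<bullet> z = 0" and sphere: "2 * (w \<bullet> z) + z \<bullet> z = 0"
      and az': "a' \<bullet> z' = 0" and sphere': "2 * (w' \<bullet> z') + z' \<bullet> z' = 0"
      and corner: "(v + b *\<^sub>R z') \<bullet> (w + z) = v \<bullet> w"
    define \<zeta> where "\<zeta> = normal_coord a w z"
    define \<zeta>' where "\<zeta>' = normal_coord a' w' z'"
    \<comment> \<open>up to quadratic terms, v \<bullet> z and w \<bullet> z' only see the normal coordinates\<close>
    have "v \<bullet> z = \<zeta> * (v \<bullet> (a \<times> w)) + (w \<bullet> z) * C"
      by (subst orthogonal_decomposition[OF m(1) az]) (simp add: inner_add_right C_def \<zeta>_def)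
    then have vz: "v \<bullet> z = - \<zeta> * (a \<bullet> (v \<times> w)) + (w \<bullet> z) * C"
      using triple_product_swap[of v a w] by simp
    have "w \<bullet> z' = \<zeta>' * (w \<bullet> (a' \<times> w')) + (w' \<bullet> z') * C'"
      by (subst orthogonal_decomposition[OF m(2) az']) (simp add: inner_add_right C'_def \<zeta>'_def)
    moreover have "b * (w \<bullet> (a' \<times> w')) = a' \<bullet> (v \<times> w)"
      using arg_cong[OF hinge, of "\<lambda>x. w \<bullet> x"] triple_product_rotate[of a' v w] by simp
    ultimately have wz': "b * (w \<bullet> z') = \<zeta>' * (a' \<bullet> (v \<times> w)) + b * (w' \<bullet> z') * C'"
      by (simp add: algebra_simps)
    have constraint: "v \<bullet> z + b * (w \<bullet> z') = - (b * (z' \<bullet> z))"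
      using corner by (simp add: inner_add_left inner_add_right inner_commute algebra_simps)
    have sphere_eq: "w \<bullet> z = - (z \<bullet> z) / 2" "w' \<bullet> z' = - (z' \<bullet> z') / 2"
      using sphere sphere' by simp_all
    have "\<zeta>' * (a' \<bullet> (v \<times> w)) - \<zeta> * (a \<bullet> (v \<times> w))
        = (v \<bullet> z + b * (w \<bullet> z')) - (w \<bullet> z) * C - b * (w' \<bullet> z') * C'"
      using vz wz' by (simp add: algebra_simps)
    then have E: "\<zeta>' * (a' \<bullet> (v \<times> w)) - \<zeta> * (a \<bullet> (v \<times> w))
        = - (b * (z' \<bullet> z)) + (b * C') * (z' \<bullet> z') / 2 + C * (z \<bullet> z) / 2"
      unfolding constraint sphere_eq by (simp add: algebra_simps)
    show "\<bar>normal_coord a' w' z' * (a' \<bullet> (v \<times> w)) - normal_coord a w z * (a \<bullet> (v \<times> w))\<bar>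
        \<le> (\<bar>b\<bar> + \<bar>C\<bar> + \<bar>b\<bar> * \<bar>C'\<bar>) * (norm z + norm z')\<^sup>2"
      unfolding E[unfolded \<zeta>_def \<zeta>'_def] by (rule second_order_terms_bound)
  qed
qed

text \<open>Combining the three corners through the cyclic system: under the cycle condition all normal
  coordinates, and then all displacements, are of second order in the total displacement.\<close>

lemma corner_residuals_quadratic:
  fixes a v w :: "nat \<Rightarrow> real^3" and \<beta> :: "nat \<Rightarrow> real"
  assumes m: "\<forall>i<3. a i \<times> w i \<noteq> 0"
    and hinge: "\<forall>i<3. \<beta> (pv i) *\<^sub>R (a (pv i) \<times> w (pv i)) = a (pv i) \<times> v i"
  shows "\<exists>K. \<forall>z. (\<forall>i<3. a i \<bullet> z i = 0 \<and> 2 * (w i \<bullet> z i) + z i \<bullet> z i = 0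
        \<and> (v i + \<beta> (pv i) *\<^sub>R z (pv i)) \<bullet> (w i + z i) = v i \<bullet> w i)
      \<longrightarrow> (\<forall>i<3. \<bar>normal_coord (a (pv i)) (w (pv i)) (z (pv i)) * (a (pv i) \<bullet> (v i \<times> w i))
          - normal_coord (a i) (w i) (z i) * (a i \<bullet> (v i \<times> w i))\<bar>
        \<le> K * (norm (z 0) + norm (z 1) + norm (z 2))\<^sup>2)"
proof -
  define \<rho> where "\<rho> i z z' = normal_coord (a (pv i)) (w (pv i)) z' * (a (pv i) \<bullet> (v i \<times> w i))
    - normal_coord (a i) (w i) z * (a i \<bullet> (v i \<times> w i))" for i z z'
  have "\<exists>K\<ge>0. \<forall>z z'. a i \<bullet> z = 0 \<longrightarrow> 2 * (w i \<bullet> z) + z \<bullet> z = 0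
      \<longrightarrow> a (pv i) \<bullet> z' = 0 \<longrightarrow> 2 * (w (pv i) \<bullet> z') + z' \<bullet> z' = 0
      \<longrightarrow> (v i + \<beta> (pv i) *\<^sub>R z') \<bullet> (w i + z) = v i \<bullet> w i
      \<longrightarrow> \<bar>\<rho> i z z'\<bar> \<le> K * (norm z + norm z')\<^sup>2" if "i < 3" for i
    unfolding \<rho>_def using vertex_estimate m hinge that nx_pv_range(2)[OF that] by blast
  then obtain K where K: "\<And>i. i < 3 \<Longrightarrow> 0 \<le> K i \<and> (\<forall>z z'. a i \<bullet> z = 0 \<longrightarrow> 2 * (w i \<bullet> z) + z \<bullet> z = 0
      \<longrightarrow> a (pv i) \<bullet> z' = 0 \<longrightarrow> 2 * (w (pv i) \<bullet> z') + z' \<bullet> z' = 0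
      \<longrightarrow> (v i + \<beta> (pv i) *\<^sub>R z') \<bullet> (w i + z) = v i \<bullet> w i
      \<longrightarrow> \<bar>\<rho> i z z'\<bar> \<le> K i * (norm z + norm z')\<^sup>2)"
    by metis
  have K_le_sum: "K i \<le> K 0 + K 1 + K 2" if "i < 3" for i
    using that K[of 0] K[of 1] K[of 2] unfolding less_3_iff by auto
  have "\<bar>\<rho> i (z i) (z (pv i))\<bar> \<le> (K 0 + K 1 + K 2) * (norm (z 0) + norm (z 1) + norm (z 2))\<^sup>2"
    if hyps: "\<forall>i<3. a i \<bullet> z i = 0 \<and> 2 * (w i \<bullet> z i) + z i \<bullet> z i = 0
        \<and> (v i + \<beta> (pv i) *\<^sub>R z (pv i)) \<bullet> (w i + z i) = v i \<bullet> w i" and i: "i < 3" for z i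
  proof -
    have zi: "a i \<bullet> z i = 0" "2 * (w i \<bullet> z i) + z i \<bullet> z i = 0"
      "(v i + \<beta> (pv i) *\<^sub>R z (pv i)) \<bullet> (w i + z i) = v i \<bullet> w i"
      using hyps i by blast+
    have "a (pv i) \<bullet> z (pv i) = 0" "2 * (w (pv i) \<bullet> z (pv i)) + z (pv i) \<bullet> z (pv i) = 0"
      using hyps nx_pv_range(2)[OF i] by blast+
    from conjunct2[OF K[OF i], rule_format, OF zi(1,2) this zi(3)]
    have "\<bar>\<rho> i (z i) (z (pv i))\<bar> \<le> K i * (norm (z i) + norm (z (pv i)))\<^sup>2" .
    also have "norm (z i) + norm (z (pv i)) \<le> norm (z 0) + norm (z 1) + norm (z 2)"
      using i unfolding less_3_iff by (elim disjE) (simp_all add: nx_pv_values del: One_nat_def)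
    then have "K i * (norm (z i) + norm (z (pv i)))\<^sup>2 \<le> K i * (norm (z 0) + norm (z 1) + norm (z 2))\<^sup>2"
      using K[OF i] by (intro mult_left_mono power_mono) simp_all
    also have "\<dots> \<le> (K 0 + K 1 + K 2) * (norm (z 0) + norm (z 1) + norm (z 2))\<^sup>2"
      by (rule mult_right_mono[OF K_le_sum[OF i]]) simp
    finally show ?thesis .
  qed
  then show ?thesis unfolding \<rho>_def by blast
qed

lemma normal_coords_quadratic_bound:
  fixes a v w :: "nat \<Rightarrow> real^3" and \<beta> :: "nat \<Rightarrow> real"
  assumes m: "\<forall>i<3. a i \<times> w i \<noteq> 0"
    and hinge: "\<forall>i<3. \<beta> (pv i) *\<^sub>R (a (pv i) \<times> w (pv i)) = a (pv i) \<times> v i"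
    and cycle: "(a 2 \<bullet> (v 0 \<times> w 0)) * (a 0 \<bullet> (v 1 \<times> w 1)) * (a 1 \<bullet> (v 2 \<times> w 2))
      \<noteq> (a 0 \<bullet> (v 0 \<times> w 0)) * (a 1 \<bullet> (v 1 \<times> w 1)) * (a 2 \<bullet> (v 2 \<times> w 2))"
  shows "\<exists>D. \<forall>z. (\<forall>i<3. a i \<bullet> z i = 0 \<and> 2 * (w i \<bullet> z i) + z i \<bullet> z i = 0
        \<and> (v i + \<beta> (pv i) *\<^sub>R z (pv i)) \<bullet> (w i + z i) = v i \<bullet> w i)
      \<longrightarrow> (\<forall>i<3. \<bar>normal_coord (a i) (w i) (z i)\<bar> \<le> D * (norm (z 0) + norm (z 1) + norm (z 2))\<^sup>2)"
proof -
  obtain K where K: "\<forall>z. (\<forall>i<3. a i \<bullet> z i = 0 \<and> 2 * (w i \<bullet> z i) + z i \<bullet> z i = 0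
        \<and> (v i + \<beta> (pv i) *\<^sub>R z (pv i)) \<bullet> (w i + z i) = v i \<bullet> w i)
      \<longrightarrow> (\<forall>i<3. \<bar>normal_coord (a (pv i)) (w (pv i)) (z (pv i)) * (a (pv i) \<bullet> (v i \<times> w i))
          - normal_coord (a i) (w i) (z i) * (a i \<bullet> (v i \<times> w i))\<bar>
        \<le> K * (norm (z 0) + norm (z 1) + norm (z 2))\<^sup>2)"
    using corner_residuals_quadratic[OF m hinge] by blast
  \<comment> \<open>the normal coordinates solve the cyclic system up to a quadratic error\<close>
  obtain C where C: "\<forall>t e. (\<forall>i<3. \<bar>t (pv i) * (a (pv i) \<bullet> (v i \<times> w i)) - t i * (a i \<bullet> (v i \<times> w i))\<bar> \<le> e)
      \<longrightarrow> (\<forall>i<3. \<bar>t i\<bar> \<le> C * e)"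
    using cyclic_system_bound[of "\<lambda>i. a (pv i) \<bullet> (v i \<times> w i)" "\<lambda>i. a i \<bullet> (v i \<times> w i)"] cycle
    unfolding nx_pv_values by auto
  show ?thesis
  proof (rule exI[of _ "C * K"], rule allI, rule impI)
    fix z assume "\<forall>i<3. a i \<bullet> z i = 0 \<and> 2 * (w i \<bullet> z i) + z i \<bullet> z i = 0
        \<and> (v i + \<beta> (pv i) *\<^sub>R z (pv i)) \<bullet> (w i + z i) = v i \<bullet> w i"
    note residuals = mp[OF spec[OF K, of z] this]
    from mp[OF spec[OF spec[OF C, of "\<lambda>i. normal_coord (a i) (w i) (z i)"]] residuals]
    show "\<forall>i<3. \<bar>normal_coord (a i) (w i) (z i)\<bar> \<le> C * K * (norm (z 0) + norm (z 1) + norm (z 2))\<^sup>2"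
      by (simp add: mult.assoc)
  qed
qed

lemma displacements_by_normal_coords:
  fixes a w :: "nat \<Rightarrow> real^3"
  assumes m: "\<forall>i<3. a i \<times> w i \<noteq> 0"
  shows "\<exists>M\<ge>0. \<exists>R. \<forall>z. (\<forall>i<3. a i \<bullet> z i = 0 \<and> 2 * (w i \<bullet> z i) + z i \<bullet> z i = 0)
      \<longrightarrow> (\<forall>i<3. norm (z i) \<le> \<bar>normal_coord (a i) (w i) (z i)\<bar> * M
          + R * (norm (z 0) + norm (z 1) + norm (z 2))\<^sup>2)"
proof -
  have "\<exists>R\<ge>0. \<forall>z. a i \<bullet> z = 0 \<longrightarrow> 2 * (w i \<bullet> z) + z \<bullet> z = 0
      \<longrightarrow> norm z \<le> \<bar>normal_coord (a i) (w i) z\<bar> * norm (a i \<times> w i) + R * (norm z)\<^sup>2" if "i < 3" for i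
    using displacement_bound m that by blast
  then obtain R where R: "\<And>i. i < 3 \<Longrightarrow> 0 \<le> R i \<and> (\<forall>z. a i \<bullet> z = 0 \<longrightarrow> 2 * (w i \<bullet> z) + z \<bullet> z = 0
      \<longrightarrow> norm z \<le> \<bar>normal_coord (a i) (w i) z\<bar> * norm (a i \<times> w i) + R i * (norm z)\<^sup>2)"
    by metis
  define M where "M = norm (a 0 \<times> w 0) + norm (a 1 \<times> w 1) + norm (a 2 \<times> w 2)"
  define R' where "R' = R 0 + R 1 + R 2"
  have M: "norm (a i \<times> w i) \<le> M" and R': "R i \<le> R'" if "i < 3" for i
    using that R[of 0] R[of 1] R[of 2] unfolding less_3_iff M_def R'_def by auto
  have "norm (z i) \<le> \<bar>normal_coord (a i) (w i) (z i)\<bar> * M + R' * (norm (z 0) + norm (z 1) + norm (z 2))\<^sup>2"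
    if hyps: "\<forall>i<3. a i \<bullet> z i = 0 \<and> 2 * (w i \<bullet> z i) + z i \<bullet> z i = 0" and i: "i < 3" for z i
  proof -
    have "norm (z i) \<le> norm (z 0) + norm (z 1) + norm (z 2)" using i unfolding less_3_iff by auto
    then have "R i * (norm (z i))\<^sup>2 \<le> R' * (norm (z 0) + norm (z 1) + norm (z 2))\<^sup>2"
      using R[OF i] R'[OF i] by (intro mult_mono power_mono) simp_all
    moreover have "\<bar>normal_coord (a i) (w i) (z i)\<bar> * norm (a i \<times> w i) \<le> \<bar>normal_coord (a i) (w i) (z i)\<bar> * M"
      by (rule mult_left_mono[OF M[OF i]]) simp
    moreover have "norm (z i) \<le> \<bar>normal_coord (a i) (w i) (z i)\<bar> * norm (a i \<times> w i) + R i * (norm (z i))\<^sup>2"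
      using R[OF i] hyps i by blast
    ultimately show ?thesis by linarith
  qed
  moreover have "0 \<le> M" unfolding M_def by simp
  ultimately show ?thesis by blast
qed

lemma displacement_quadratic_bound:
  fixes a v w :: "nat \<Rightarrow> real^3" and \<beta> :: "nat \<Rightarrow> real"
  assumes m: "\<forall>i<3. a i \<times> w i \<noteq> 0"
    and hinge: "\<forall>i<3. \<beta> (pv i) *\<^sub>R (a (pv i) \<times> w (pv i)) = a (pv i) \<times> v i"
    and cycle: "(a 2 \<bullet> (v 0 \<times> w 0)) * (a 0 \<bullet> (v 1 \<times> w 1)) * (a 1 \<bullet> (v 2 \<times> w 2))
      \<noteq> (a 0 \<bullet> (v 0 \<times> w 0)) * (a 1 \<bullet> (v 1 \<times> w 1)) * (a 2 \<bullet> (v 2 \<times> w 2))"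
  shows "\<exists>L. \<forall>z. (\<forall>i<3. a i \<bullet> z i = 0 \<and> 2 * (w i \<bullet> z i) + z i \<bullet> z i = 0
        \<and> (v i + \<beta> (pv i) *\<^sub>R z (pv i)) \<bullet> (w i + z i) = v i \<bullet> w i)
      \<longrightarrow> norm (z 0) + norm (z 1) + norm (z 2) \<le> L * (norm (z 0) + norm (z 1) + norm (z 2))\<^sup>2"
proof -
  obtain D where D: "\<forall>z. (\<forall>i<3. a i \<bullet> z i = 0 \<and> 2 * (w i \<bullet> z i) + z i \<bullet> z i = 0
        \<and> (v i + \<beta> (pv i) *\<^sub>R z (pv i)) \<bullet> (w i + z i) = v i \<bullet> w i)
      \<longrightarrow> (\<forall>i<3. \<bar>normal_coord (a i) (w i) (z i)\<bar> \<le> D * (norm (z 0) + norm (z 1) + norm (z 2))\<^sup>2)"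
    using normal_coords_quadratic_bound[OF m hinge cycle] by blast
  obtain M R where "0 \<le> M" and MR: "\<forall>z. (\<forall>i<3. a i \<bullet> z i = 0 \<and> 2 * (w i \<bullet> z i) + z i \<bullet> z i = 0)
      \<longrightarrow> (\<forall>i<3. norm (z i) \<le> \<bar>normal_coord (a i) (w i) (z i)\<bar> * M
          + R * (norm (z 0) + norm (z 1) + norm (z 2))\<^sup>2)"
    using displacements_by_normal_coords[OF m] by blast
  show ?thesis
  proof (rule exI[of _ "3 * (M * D + R)"], rule allI, rule impI)
    fix z assume hyps: "\<forall>i<3. a i \<bullet> z i = 0 \<and> 2 * (w i \<bullet> z i) + z i \<bullet> z i = 0
        \<and> (v i + \<beta> (pv i) *\<^sub>R z (pv i)) \<bullet> (w i + z i) = v i \<bullet> w i"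
    define s where "s = norm (z 0) + norm (z 1) + norm (z 2)"
    have "norm (z i) \<le> (M * D + R) * s\<^sup>2" if i: "i < 3" for i
    proof -
      have "\<bar>normal_coord (a i) (w i) (z i)\<bar> \<le> D * s\<^sup>2"
        using D hyps i unfolding s_def by blast
      then have "\<bar>normal_coord (a i) (w i) (z i)\<bar> * M \<le> (D * s\<^sup>2) * M"
        using \<open>0 \<le> M\<close> by (rule mult_right_mono)
      moreover have "norm (z i) \<le> \<bar>normal_coord (a i) (w i) (z i)\<bar> * M + R * s\<^sup>2"
        using MR hyps i unfolding s_def by blast
      ultimately show ?thesis by (simp add: algebra_simps)
    qed
    then have "norm (z 0) \<le> (M * D + R) * s\<^sup>2" "norm (z 1) \<le> (M * D + R) * s\<^sup>2"
      "norm (z 2) \<le> (M * D + R) * s\<^sup>2" by simp_all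
    then have "norm (z 0) + norm (z 1) + norm (z 2) \<le> 3 * ((M * D + R) * s\<^sup>2)" by linarith
    then show "norm (z 0) + norm (z 1) + norm (z 2) \<le> 3 * (M * D + R) * (norm (z 0) + norm (z 1) + norm (z 2))\<^sup>2"
      unfolding s_def by (simp only: mult.assoc)
  qed
qed

text \<open>A nonnegative continuous function vanishing at 0 and bounded by a multiple of its square
  vanishes identically, since otherwise it would attain a small positive value violating the
  bound.\<close>

lemma vanishing_if_quadratically_bounded:
  fixes f :: "real \<Rightarrow> real"
  assumes cont: "continuous_on {0..\<epsilon>} f" and f0: "f 0 = 0"
    and bound: "\<forall>s\<in>{0..\<epsilon>}. 0 \<le> f s \<and> f s \<le> L * (f s)\<^sup>2"
  shows "\<forall>s\<in>{0..\<epsilon>}. f s = 0"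
proof (rule ccontr)
  assume "\<not> (\<forall>s\<in>{0..\<epsilon>}. f s = 0)"
  then obtain s1 where s1: "s1 \<in> {0..\<epsilon>}" and pos: "f s1 > 0"
    using bound by force
  have "f s1 * 1 \<le> f s1 * (L * f s1)" using bound s1 by (simp add: power2_eq_square algebra_simps)
  then have L: "1 \<le> L * f s1" using pos by (simp add: mult_le_cancel_left)
  then have "L > 0" using pos by (smt (verit) mult_nonpos_nonneg)
  \<comment> \<open>by continuity f takes the value 1 / (2 * L), which the quadratic bound excludes\<close>
  define c where "c = 1 / (2 * L)"
  have "0 < c" "c \<le> f s1" unfolding c_def using \<open>L > 0\<close> L by (simp_all add: field_simps)
  moreover have "continuous_on {0..s1} f"
    by (rule continuous_on_subset[OF cont]) (use s1 in auto)
  ultimately obtain x where x: "0 \<le> x" "x \<le> s1" "f x = c"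
    using IVT'[of f 0 c s1] f0 s1 by auto
  then have "c \<le> L * c\<^sup>2" using bound s1 by auto
  moreover have "L * c\<^sup>2 = c / 2" unfolding c_def using \<open>L > 0\<close> by (simp add: power2_eq_square field_simps)
  ultimately show False using \<open>0 < c\<close> by linarith
qed

text \<open>The face congruences of a deformed mesh, expressed through the displacements W' i - W i; here
  \<alpha> i, \<beta> i are the coordinates of V (i + 1) in the plane of the side face i.\<close>

lemma congruent_faces_constraints:
  fixes A V W V' W' :: "nat \<Rightarrow> real^3" and \<alpha> \<beta> :: "nat \<Rightarrow> real"
  assumes co: "\<forall>i<3. V (nx i) - A i = \<alpha> i *\<^sub>R (A (nx i) - A i) + \<beta> i *\<^sub>R (W i - A i)"
    and faces: "\<forall>i<3. face_congruent [(A i, A i), (A (nx i), A (nx i)), (V (nx i), V' (nx i)), (W i, W' i)]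
      \<and> face_congruent [(V i, V' i), (A i, A i), (W i, W' i)]"
  shows "\<forall>i<3. V' i - V i = \<beta> (pv i) *\<^sub>R (W' (pv i) - W (pv i))"
    and "\<forall>i<3. (A (nx i) - A i) \<bullet> (W' i - W i) = 0
      \<and> 2 * ((W i - A i) \<bullet> (W' i - W i)) + (W' i - W i) \<bullet> (W' i - W i) = 0
      \<and> ((V i - A i) + \<beta> (pv i) *\<^sub>R (W' (pv i) - W (pv i))) \<bullet> ((W i - A i) + (W' i - W i))
        = (V i - A i) \<bullet> (W i - A i)"
proof -
  have side: "(A (nx i) - A i) \<bullet> (W' i - W i) = 0"
      "2 * ((W i - A i) \<bullet> (W' i - W i)) + (W' i - W i) \<bullet> (W' i - W i) = 0"
      "V' (nx i) - V (nx i) = \<beta> i *\<^sub>R (W' i - W i)" if "i < 3" for i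
    using side_face_congruence[of "A i" "A (nx i)" "V (nx i)" "V' (nx i)" "W i" "W' i" "\<alpha> i" "\<beta> i"]
      co faces that by blast+
  show V': "\<forall>i<3. V' i - V i = \<beta> (pv i) *\<^sub>R (W' (pv i) - W (pv i))"
  proof (intro allI impI)
    fix i :: nat assume i: "i < 3"
    show "V' i - V i = \<beta> (pv i) *\<^sub>R (W' (pv i) - W (pv i))"
      using side(3)[OF nx_pv_range(2)[OF i]] unfolding nx_pv_range(3)[OF i] .
  qed
  show "\<forall>i<3. (A (nx i) - A i) \<bullet> (W' i - W i) = 0
      \<and> 2 * ((W i - A i) \<bullet> (W' i - W i)) + (W' i - W i) \<bullet> (W' i - W i) = 0
      \<and> ((V i - A i) + \<beta> (pv i) *\<^sub>R (W' (pv i) - W (pv i))) \<bullet> ((W i - A i) + (W' i - W i))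
        = (V i - A i) \<bullet> (W i - A i)"
  proof (intro allI impI conjI)
    fix i :: nat assume i: "i < 3"
    show "(A (nx i) - A i) \<bullet> (W' i - W i) = 0"
      "2 * ((W i - A i) \<bullet> (W' i - W i)) + (W' i - W i) \<bullet> (W' i - W i) = 0"
      using side[OF i] by blast+
    have "(V' i - A i) \<bullet> (W' i - A i) = (V i - A i) \<bullet> (W i - A i)"
      using corner_congruence faces i by blast
    moreover have "V' i - A i = (V i - A i) + \<beta> (pv i) *\<^sub>R (W' (pv i) - W (pv i))"
      using V' i by (metis add_diff_cancel_left' diff_add_cancel add_diff_eq)
    ultimately show "((V i - A i) + \<beta> (pv i) *\<^sub>R (W' (pv i) - W (pv i))) \<bullet> ((W i - A i) + (W' i - W i))
        = (V i - A i) \<bullet> (W i - A i)"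
      by simp
  qed
qed

definition corner_normal ::
  "(nat \<Rightarrow> real^3) \<Rightarrow> (nat \<Rightarrow> real^3) \<Rightarrow> (nat \<Rightarrow> real^3) \<Rightarrow> nat \<Rightarrow> real^3" where
  "corner_normal A V W i = (V i - A i) \<times> (W i - A i)"

definition corner_X ::
  "(nat \<Rightarrow> real^3) \<Rightarrow> (nat \<Rightarrow> real^3) \<Rightarrow> (nat \<Rightarrow> real^3) \<Rightarrow> nat \<Rightarrow> real" where
  "corner_X A V W i = (A i - A (pv i)) \<bullet> corner_normal A V W i"

definition corner_Y ::
  "(nat \<Rightarrow> real^3) \<Rightarrow> (nat \<Rightarrow> real^3) \<Rightarrow> (nat \<Rightarrow> real^3) \<Rightarrow> nat \<Rightarrow> real" where
  "corner_Y A V W i = (A (nx i) - A i) \<bullet> corner_normal A V W i"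

definition cycle_condition ::
  "(nat \<Rightarrow> real^3) \<Rightarrow> (nat \<Rightarrow> real^3) \<Rightarrow> (nat \<Rightarrow> real^3) \<Rightarrow> bool" where
  "cycle_condition A V W \<longleftrightarrow>
     corner_X A V W 0 * corner_X A V W 1 * corner_X A V W 2 \<noteq> corner_Y A V W 0 * corner_Y A V W 1 * corner_Y A V W 2"

context
  fixes A V W :: "nat \<Rightarrow> real^3"
  assumes nondeg: "\<not> collinear {A 0, A 1, A 2}"
    and corner_nondeg: "\<forall>i<3. \<not> collinear {0, V i - A i, W i - A i}"
    and next_edge_oblique: "\<forall>i<3. A (nx i) - A i \<notin> span {V i - A i, W i - A i}"
begin

lemma next_edge_transversal:
  assumes "i < 3"
  shows "corner_Y A V W i \<noteq> 0"
  unfolding corner_Y_def corner_normal_def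
  using triple_product_nonzero corner_nondeg next_edge_oblique assms by blast

lemma next_edge_nonzero:
  assumes "i < 3"
  shows "A (nx i) \<noteq> A i"
  using next_edge_oblique assms span_zero by force

lemma hinge_cross_nonzero:
  assumes "i < 3"
  shows "(A (nx i) - A i) \<times> (W i - A i) \<noteq> 0"
proof
  assume "(A (nx i) - A i) \<times> (W i - A i) = 0"
  then have "corner_Y A V W i = 0"
    using triple_product_swap[of "V i - A i" "A (nx i) - A i" "W i - A i"]
    unfolding corner_Y_def corner_normal_def by simp
  with next_edge_transversal[OF assms] show False ..
qed

lemma lline_eq:
  assumes "i < 3"
  shows "lline A V W i = {x. (x - A 0) \<bullet> plane_normal A = 0 \<and> (x - A i) \<bullet> corner_normal A V W i = 0}"
proof -
  have "(V i - A i) \<times> (W i - A i) \<noteq> 0"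
    using corner_nondeg assms cross_eq_0 by blast
  then have "affine hull {A i, V i, W i} = {x. (x - A i) \<bullet> corner_normal A V W i = 0}"
    unfolding corner_normal_def by (rule affine_hull_3_plane)
  moreover have "affine hull {A 0, A 1, A 2} = {x. (x - A 0) \<bullet> plane_normal A = 0}"
    unfolding plane_normal_def by (rule affine_hull_3_plane[OF cross_nonzero_if_noncollinear[OF nondeg]])
  ultimately show ?thesis unfolding lline_def by auto
qed

lemma lline_parallel_if_common_direction:
  assumes ij: "i < 3" "j < 3"
    and u: "u \<noteq> 0" "u \<bullet> plane_normal A = 0" "u \<bullet> corner_normal A V W i = 0" "u \<bullet> corner_normal A V W j = 0"
  shows "lines_parallel (lline A V W i) (lline A V W j)"
proof -
  have n: "plane_normal A \<noteq> 0"
    unfolding plane_normal_def by (rule cross_nonzero_if_noncollinear[OF nondeg])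
  have in_plane: "(A k - A 0) \<bullet> plane_normal A = 0" if "k < 3" for k
    using that unfolding less_3_iff plane_normal_def
    by (elim disjE) (simp_all only: dot_cross_self diff_self inner_zero_left)
  have transversal: "plane_normal A \<times> corner_normal A V W k \<noteq> 0" if k: "k < 3" for k
  proof (rule cross_nonzero_if_oblique[OF n])
    show "(A (nx k) - A k) \<bullet> plane_normal A = 0"
      using in_plane[of "nx k"] in_plane[OF k] nx_pv_range(1)[OF k] by (simp add: inner_diff_left)
    show "(A (nx k) - A k) \<bullet> corner_normal A V W k \<noteq> 0"
      using next_edge_transversal[OF k] unfolding corner_Y_def .
  qed
  show ?thesis unfolding lline_eq[OF ij(1)] lline_eq[OF ij(2)]
    by (rule parallel_plane_sections[OF transversal[OF ij(1)] transversal[OF ij(2)] u in_plane[OF ij(1)] in_plane[OF ij(2)]])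
qed

lemma Bpt_eq_if_concurrent:
  assumes nonpar: "\<forall>i<3. \<forall>j<3. i \<noteq> j \<longrightarrow> \<not> lines_parallel (lline A V W i) (lline A V W j)"
    and P: "\<forall>i<3. P \<in> lline A V W i"
    and i: "i < 3"
  shows "Bpt A V W i = P"
proof -
  have unique: "Q = P" if "j < 3" "k < 3" "j \<noteq> k" "Q \<in> lline A V W j" "Q \<in> lline A V W k" for j k Q
  proof (rule ccontr)
    assume "Q \<noteq> P"
    have "(R - A 0) \<bullet> plane_normal A = 0 \<and> (R - A l) \<bullet> corner_normal A V W l = 0"
      if "l < 3" "R \<in> lline A V W l" for l R
      using that lline_eq by blast
    then have "(Q - P) \<bullet> plane_normal A = 0" "(Q - P) \<bullet> corner_normal A V W j = 0"
      "(Q - P) \<bullet> corner_normal A V W k = 0"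
      using that P by (fastforce simp: inner_diff_left)+
    moreover have "Q - P \<noteq> 0" using \<open>Q \<noteq> P\<close> by simp
    ultimately have "lines_parallel (lline A V W j) (lline A V W k)"
      using lline_parallel_if_common_direction[OF that(1,2)] by blast
    then show False using nonpar that(1-3) by blast
  qed
  show ?thesis unfolding Bpt_def
  proof (rule the_equality)
    show "P \<in> lline A V W i \<inter> lline A V W (nx i)" using P i nx_pv_range(1)[OF i] by blast
    show "Q = P" if "Q \<in> lline A V W i \<inter> lline A V W (nx i)" for Q
      using unique[OF i nx_pv_range(1)[OF i] nx_pv_range(4)[OF i, symmetric]] that by blast
  qed
qed

lemma cycle_condition_if_general_position:
  assumes nonpar: "\<forall>i<3. \<forall>j<3. i \<noteq> j \<longrightarrow> \<not> lines_parallel (lline A V W i) (lline A V W j)"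
    and B_noncol: "\<not> collinear {Bpt A V W 0, Bpt A V W 1, Bpt A V W 2}"
  shows "cycle_condition A V W"
proof (rule ccontr)
  assume "\<not> cycle_condition A V W"
  then have ceva: "((A 0 - A 2) \<bullet> corner_normal A V W 0) * ((A 1 - A 0) \<bullet> corner_normal A V W 1)
      * ((A 2 - A 1) \<bullet> corner_normal A V W 2)
    = ((A 1 - A 0) \<bullet> corner_normal A V W 0) * ((A 2 - A 1) \<bullet> corner_normal A V W 1)
      * ((A 0 - A 2) \<bullet> corner_normal A V W 2)"
    unfolding cycle_condition_def corner_X_def corner_Y_def nx_pv_values by blast
  have "(A 1 - A 0) \<bullet> corner_normal A V W 0 \<noteq> 0" "(A 0 - A 2) \<bullet> corner_normal A V W 2 \<noteq> 0"
    using next_edge_transversal[of 0] next_edge_transversal[of 2] by (simp_all add: corner_Y_def nx_pv_values)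
  from ceva_dichotomy[OF nondeg this ceva] show False
  proof (elim disjE exE conjE)
    fix D assume "D \<noteq> 0" "D \<bullet> plane_normal A = 0"
      "D \<bullet> corner_normal A V W 0 = 0" "D \<bullet> corner_normal A V W 1 = 0"
    then have "lines_parallel (lline A V W 0) (lline A V W 1)"
      by (intro lline_parallel_if_common_direction) simp_all
    then show False using nonpar by auto
  next
    fix P assume "(P - A 0) \<bullet> plane_normal A = 0" "\<forall>i<3. (P - A i) \<bullet> corner_normal A V W i = 0"
    then have "\<forall>i<3. P \<in> lline A V W i" using lline_eq by blast
    then have "Bpt A V W i = P" if "i < 3" for i
      using Bpt_eq_if_concurrent[OF nonpar _ that] by blast
    then have "{Bpt A V W 0, Bpt A V W 1, Bpt A V W 2} = {P}" by simp
    then show False using B_noncol by simp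
  qed
qed

lemma not_inf_flexible_if_cycle_condition:
  assumes cycle: "cycle_condition A V W"
  shows "\<not> inf_flexible A V W"
proof
  assume "inf_flexible A V W"
  then obtain dV dW where deform: "inf_isometric_deformation A V W dV dW"
    and moving: "\<exists>i<3. dV i \<noteq> 0 \<or> dW i \<noteq> 0"
    unfolding inf_flexible_def by blast
  have side: "inf_rigid [(A i, 0), (A (nx i), 0), (V (nx i), dV (nx i)), (W i, dW i)]"
    and corner: "inf_rigid [(V i, dV i), (A i, 0), (W i, dW i)]" if "i < 3" for i
    using deform that unfolding inf_isometric_deformation_def by blast+
  \<comment> \<open>each side face turns about its hinge A i A (nx i) with some angular speed t i\<close>
  have "\<exists>t. dW i = t *\<^sub>R ((A (nx i) - A i) \<times> (W i - A i))
      \<and> dV (nx i) = t *\<^sub>R ((A (nx i) - A i) \<times> (V (nx i) - A (nx i)))" if "i < 3" for i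
    using side_face_velocity[OF side[OF that]] next_edge_nonzero[OF that] by blast
  then obtain t where t: "\<And>i. i < 3 \<Longrightarrow> dW i = t i *\<^sub>R ((A (nx i) - A i) \<times> (W i - A i))
      \<and> dV (nx i) = t i *\<^sub>R ((A (nx i) - A i) \<times> (V (nx i) - A (nx i)))"
    by metis
  \<comment> \<open>the corner at A i links the speeds of the two adjacent side faces\<close>
  have link: "t (pv i) * corner_X A V W i - t i * corner_Y A V W i = 0" if i: "i < 3" for i
  proof -
    have "dV i = t (pv i) *\<^sub>R ((A i - A (pv i)) \<times> (V i - A i))"
      using t[OF nx_pv_range(2)[OF i]] unfolding nx_pv_range(3)[OF i] by blast
    moreover have "dW i = t i *\<^sub>R ((A (nx i) - A i) \<times> (W i - A i))" using t[OF i] by blast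
    ultimately show ?thesis
      using corner_velocity[OF corner[OF i]]
        triple_product_swap[of "V i - A i" "A (nx i) - A i" "W i - A i"]
        triple_product_rotate[of "A i - A (pv i)" "V i - A i" "W i - A i"]
      unfolding corner_X_def corner_Y_def corner_normal_def
      by (simp add: cross_triple inner_commute)
  qed
  obtain C where C: "\<forall>t e. (\<forall>i<3. \<bar>t (pv i) * corner_X A V W i - t i * corner_Y A V W i\<bar> \<le> e)
      \<longrightarrow> (\<forall>i<3. \<bar>t i\<bar> \<le> C * e)"
    using cyclic_system_bound cycle unfolding cycle_condition_def by blast
  moreover have "\<forall>i<3. \<bar>t (pv i) * corner_X A V W i - t i * corner_Y A V W i\<bar> \<le> 0"
    using link by simp
  ultimately have "\<forall>i<3. \<bar>t i\<bar> \<le> C * 0" by blast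
  then have "t i = 0" if "i < 3" for i using that by simp
  then have "dV i = 0 \<and> dW i = 0" if i: "i < 3" for i
    using i t[OF i] t[OF nx_pv_range(2)[OF i]] nx_pv_range(2,3)[OF i] by auto
  then show False using moving by blast
qed

text \<open>Planarity of the side faces: V (i + 1) has coordinates \<alpha> i, \<beta> i in the plane of the hinge
  A i A (i + 1) and W i; seen from the corner at A (i + 1), the coordinate \<beta> i turns the edge
  vector V (i + 1) - A (i + 1) into W i - A i up to a multiple of the hinge.\<close>

lemma side_face_coordinates:
  assumes planar: "planar_faces A V W"
  obtains \<alpha> \<beta> where "\<forall>i<3. V (nx i) - A i = \<alpha> i *\<^sub>R (A (nx i) - A i) + \<beta> i *\<^sub>R (W i - A i)"
    and "\<forall>i<3. \<beta> (pv i) *\<^sub>R ((A (nx (pv i)) - A (pv i)) \<times> (W (pv i) - A (pv i)))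
      = (A (nx (pv i)) - A (pv i)) \<times> (V i - A i)"
proof -
  have "\<exists>\<alpha> \<beta>. V (nx i) - A i = \<alpha> *\<^sub>R (A (nx i) - A i) + \<beta> *\<^sub>R (W i - A i)" if i: "i < 3" for i
  proof (rule coplanar_combination)
    have "coplanar {A i, A (nx i), V (nx i), W i}" using planar i unfolding planar_faces_def by blast
    moreover have "{A i, A (nx i), V (nx i), W i} = {A i, A (nx i), W i, V (nx i)}" by auto
    ultimately show "coplanar {A i, A (nx i), W i, V (nx i)}" by simp
  qed (rule hinge_cross_nonzero[OF i])
  then obtain \<alpha> \<beta> where co: "\<forall>i<3. V (nx i) - A i = \<alpha> i *\<^sub>R (A (nx i) - A i) + \<beta> i *\<^sub>R (W i - A i)"
    by metis
  have "\<beta> (pv i) *\<^sub>R ((A (nx (pv i)) - A (pv i)) \<times> (W (pv i) - A (pv i)))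
      = (A (nx (pv i)) - A (pv i)) \<times> (V i - A i)" if i: "i < 3" for i
  proof -
    define a where "a = A (nx (pv i)) - A (pv i)"
    have "V i - A i = (\<alpha> (pv i) - 1) *\<^sub>R a + \<beta> (pv i) *\<^sub>R (W (pv i) - A (pv i))"
      using co nx_pv_range(2,3)[OF i] unfolding a_def by (force simp: algebra_simps)
    then show ?thesis unfolding a_def[symmetric] by (simp add: cross_add_right cross_mult_right)
  qed
  with co show ?thesis using that by blast
qed

lemma not_flexible_if_cycle_condition:
  assumes planar: "planar_faces A V W" and cycle: "cycle_condition A V W"
  shows "\<not> flexible A V W"
proof
  assume "flexible A V W"
  then obtain \<epsilon> :: real and Vt Wt :: "real \<Rightarrow> nat \<Rightarrow> real^3" where
    cont: "\<forall>i<3. continuous_on {0..\<epsilon>} (\<lambda>s. Vt s i) \<and> continuous_on {0..\<epsilon>} (\<lambda>s. Wt s i)" and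
    init: "\<forall>i<3. Vt 0 i = V i \<and> Wt 0 i = W i" and
    faces: "\<forall>s\<in>{0..\<epsilon>}. \<forall>i<3.
            face_congruent [(A i, A i), (A (nx i), A (nx i)), (V (nx i), Vt s (nx i)), (W i, Wt s i)]
          \<and> face_congruent [(V i, Vt s i), (A i, A i), (W i, Wt s i)]" and
    moving: "\<exists>s\<in>{0..\<epsilon>}. \<exists>i<3. Vt s i \<noteq> V i \<or> Wt s i \<noteq> W i"
    unfolding flexible_def by blast
  obtain \<alpha> \<beta> where co: "\<forall>i<3. V (nx i) - A i = \<alpha> i *\<^sub>R (A (nx i) - A i) + \<beta> i *\<^sub>R (W i - A i)"
    and hinge: "\<forall>i<3. \<beta> (pv i) *\<^sub>R ((A (nx (pv i)) - A (pv i)) \<times> (W (pv i) - A (pv i)))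
      = (A (nx (pv i)) - A (pv i)) \<times> (V i - A i)"
    using side_face_coordinates[OF planar] by blast
  obtain L where L: "\<forall>z. (\<forall>i<3. (A (nx i) - A i) \<bullet> z i = 0 \<and> 2 * ((W i - A i) \<bullet> z i) + z i \<bullet> z i = 0
        \<and> ((V i - A i) + \<beta> (pv i) *\<^sub>R z (pv i)) \<bullet> ((W i - A i) + z i) = (V i - A i) \<bullet> (W i - A i))
      \<longrightarrow> norm (z 0) + norm (z 1) + norm (z 2) \<le> L * (norm (z 0) + norm (z 1) + norm (z 2))\<^sup>2"
    using displacement_quadratic_bound[of "\<lambda>i. A (nx i) - A i" "\<lambda>i. W i - A i" \<beta> "\<lambda>i. V i - A i"]
      hinge_cross_nonzero hinge cycle
    unfolding cycle_condition_def corner_X_def corner_Y_def corner_normal_def nx_pv_values by auto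
  \<comment> \<open>the total displacement S of the points W i stays zero along the deformation\<close>
  define S where "S s = norm (Wt s 0 - W 0) + norm (Wt s 1 - W 1) + norm (Wt s 2 - W 2)" for s
  have constraints: "(\<forall>i<3. Vt s i - V i = \<beta> (pv i) *\<^sub>R (Wt s (pv i) - W (pv i))) \<and> S s \<le> L * (S s)\<^sup>2"
    if s: "s \<in> {0..\<epsilon>}" for s
  proof -
    have "\<forall>i<3. face_congruent [(A i, A i), (A (nx i), A (nx i)), (V (nx i), Vt s (nx i)), (W i, Wt s i)]
      \<and> face_congruent [(V i, Vt s i), (A i, A i), (W i, Wt s i)]"
      using faces s by blast
    note displacement = congruent_faces_constraints[OF co this]
    have "S s \<le> L * (S s)\<^sup>2"
      using L[rule_format, of "\<lambda>i. Wt s i - W i"] displacement(2) unfolding S_def by simp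
    with displacement(1) show ?thesis by blast
  qed
  have "continuous_on {0..\<epsilon>} S"
    unfolding S_def using cont by (intro continuous_intros) auto
  moreover have "S 0 = 0" unfolding S_def using init by simp
  moreover have "\<forall>s\<in>{0..\<epsilon>}. 0 \<le> S s \<and> S s \<le> L * (S s)\<^sup>2"
    using constraints unfolding S_def by simp
  ultimately have S_zero: "\<forall>s\<in>{0..\<epsilon>}. S s = 0"
    by (rule vanishing_if_quadratically_bounded)
  have "Wt s i = W i \<and> Vt s i = V i" if s: "s \<in> {0..\<epsilon>}" and i: "i < 3" for s i
  proof -
    have "norm (Wt s 0 - W 0) + norm (Wt s 1 - W 1) + norm (Wt s 2 - W 2) = 0"
      using S_zero s unfolding S_def by blast
    then have "norm (Wt s 0 - W 0) = 0" "norm (Wt s 1 - W 1) = 0" "norm (Wt s 2 - W 2) = 0"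
      using norm_ge_zero[of "Wt s 0 - W 0"] norm_ge_zero[of "Wt s 1 - W 1"]
        norm_ge_zero[of "Wt s 2 - W 2"] by linarith+
    then have "Wt s 0 = W 0" "Wt s 1 = W 1" "Wt s 2 = W 2" by simp_all
    then have W_fixed: "Wt s j = W j" if "j < 3" for j using that unfolding less_3_iff by auto
    have "Vt s i - V i = \<beta> (pv i) *\<^sub>R (Wt s (pv i) - W (pv i))" using constraints[OF s] i by blast
    then show ?thesis using W_fixed[OF i] W_fixed[OF nx_pv_range(2)[OF i]] by simp
  qed
  then show False using moving by blast
qed

end

theorem corollary6:
  fixes A V W :: "nat \<Rightarrow> real^3"
  assumes nondeg: "\<not> collinear {A 0, A 1, A 2}"
    and planar: "planar_faces A V W"
    and vw: "\<forall>i<3. \<not> collinear {0, V i - A i, W i - A i}"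
    and a_prev: "\<forall>i<3. A i - A (pv i) \<notin> span {V i - A i, W i - A i}"
    and a_next: "\<forall>i<3. A (nx i) - A i \<notin> span {V i - A i, W i - A i}"
    and nonpar: "\<forall>i<3. \<forall>j<3. i \<noteq> j \<longrightarrow> \<not> lines_parallel (lline A V W i) (lline A V W j)"
    and B_noncol: "\<not> collinear {Bpt A V W 0, Bpt A V W 1, Bpt A V W 2}"
    and A_ne_B: "\<forall>i<3. A i \<noteq> Bpt A V W (pv i) \<and> A i \<noteq> Bpt A V W i"
  shows "\<not> inf_flexible A V W \<and> \<not> flexible A V W"
proof -
  have cycle: "cycle_condition A V W"
    by (rule cycle_condition_if_general_position[OF nondeg vw a_next nonpar B_noncol])
  show ?thesis
    using not_inf_flexible_if_cycle_condition[OF nondeg vw a_next cycle]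
      not_flexible_if_cycle_condition[OF nondeg vw a_next planar cycle]
    by blast
qed

end
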